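(* If $G$ is a connected locally Dirac graph of order at least $4$, then $G$ is $3$-connected.
   Context: A graph $G$ is locally Dirac if for every vertex $v \in V(G)$ and every $u \in N(v)$, $\deg_{\langle N(v)\rangle}(u) \ge \deg_G(v)/2$, where $N(v)$ is the open neighbourhood of $v$ and $\langle N(v)\rangle$ the subgraph induced by it. *)

theory Defs
  imports Complex_Main
begin

definition graph :: "'a set \<Rightarrow> ('a \<Rightarrow> 'a \<Rightarrow> bool) \<Rightarrow> bool" where
  "graph V E \<longleftrightarrow> finite V \<and> (\<forall>u v. E u v \<longrightarrow> u \<in> V \<and> v \<in> V)
     \<and> (\<forall>u v. E u v \<longrightarrow> E v u) \<and> (\<forall>v. \<not> E v v)"

definition nbhd :: "'a set \<Rightarrow> ('a \<Rightarrow> 'a \<Rightarrow> bool) \<Rightarrow> 'a \<Rightarrow> 'a set" where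
  "nbhd V E v = {u \<in> V. E v u}"

definition degree :: "'a set \<Rightarrow> ('a \<Rightarrow> 'a \<Rightarrow> bool) \<Rightarrow> 'a \<Rightarrow> nat" where
  "degree V E v = card (nbhd V E v)"

definition induced_degree :: "'a set \<Rightarrow> ('a \<Rightarrow> 'a \<Rightarrow> bool) \<Rightarrow> 'a set \<Rightarrow> 'a \<Rightarrow> nat" where
  "induced_degree V E S u = card {w \<in> S. E u w}"

definition locally_dirac :: "'a set \<Rightarrow> ('a \<Rightarrow> 'a \<Rightarrow> bool) \<Rightarrow> bool" where
  "locally_dirac V E \<longleftrightarrow> (\<forall>v\<in>V. \<forall>u\<in>nbhd V E v.
     real (induced_degree V E (nbhd V E v) u) \<ge> real (degree V E v) / 2)"

definition connected_on :: "('a \<Rightarrow> 'a \<Rightarrow> bool) \<Rightarrow> 'a set \<Rightarrow> bool" where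
  "connected_on E S \<longleftrightarrow> S \<noteq> {} \<and>
     (\<forall>u\<in>S. \<forall>v\<in>S. (\<lambda>x y. x \<in> S \<and> y \<in> S \<and> E x y)\<^sup>*\<^sup>* u v)"

definition connected_graph :: "'a set \<Rightarrow> ('a \<Rightarrow> 'a \<Rightarrow> bool) \<Rightarrow> bool" where
  "connected_graph V E \<longleftrightarrow> connected_on E V"

definition k_connected :: "nat \<Rightarrow> 'a set \<Rightarrow> ('a \<Rightarrow> 'a \<Rightarrow> bool) \<Rightarrow> bool" where
  "k_connected k V E \<longleftrightarrow> card V > k \<and>
     (\<forall>X. X \<subseteq> V \<and> card X < k \<longrightarrow> connected_on E (V - X))"

end

theory Submission
  imports Defs
begin

text \<open>Let \<open>X\<close> be a set of at most two vertices and call two vertices outside \<open>X\<close> linked if a walk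
  avoiding \<open>X\<close> joins them. In a locally Dirac graph two neighbours \<open>p, q\<close> of a vertex \<open>x\<close> share
  \<open>\<ge> deg x / 2\<close> neighbours each inside \<open>N(x) - {p, q}\<close>; if \<open>p, q\<close> are non-adjacent this leaves
  at least two common neighbours, one of which avoids \<open>X\<close>, so all neighbours of a vertex that
  lie outside \<open>X\<close> are linked. Moreover the ends of an edge inside \<open>X\<close> have a common neighbour
  outside \<open>X\<close>. Following a walk of \<open>G\<close> between two vertices outside \<open>X\<close>, these two facts let
  us bypass every visit to \<open>X\<close>, so \<open>G - X\<close> is connected.\<close>

abbreviation reachable_in :: "('a \<Rightarrow> 'a \<Rightarrow> bool) \<Rightarrow> 'a set \<Rightarrow> 'a \<Rightarrow> 'a \<Rightarrow> bool" where
  "reachable_in E S \<equiv> (\<lambda>x y. x \<in> S \<and> y \<in> S \<and> E x y)\<^sup>*\<^sup>*"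

lemma graph_finite: "graph V E \<Longrightarrow> finite V"
  unfolding graph_def by blast

lemma graph_sym: "graph V E \<Longrightarrow> E u v \<Longrightarrow> E v u"
  unfolding graph_def by blast

lemma graph_irrefl: "graph V E \<Longrightarrow> \<not> E v v"
  unfolding graph_def by blast

lemma graph_edge_in_vertices: "graph V E \<Longrightarrow> E u v \<Longrightarrow> u \<in> V \<and> v \<in> V"
  unfolding graph_def by blast

lemma nbhd_graph: "graph V E \<Longrightarrow> nbhd V E v = {u. E v u}"
  unfolding nbhd_def by (auto dest: graph_edge_in_vertices)

lemma finite_nbhd: "graph V E \<Longrightarrow> finite (nbhd V E v)"
  unfolding nbhd_def by (simp add: graph_finite)

lemma locally_diracD:
  assumes "locally_dirac V E" "x \<in> V" "p \<in> nbhd V E x"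
  shows "card (nbhd V E x) \<le> 2 * card {w \<in> nbhd V E x. E p w}"
proof -
  have "real (card (nbhd V E x)) / 2 \<le> real (card {w \<in> nbhd V E x. E p w})"
    using assms unfolding locally_dirac_def induced_degree_def degree_def by blast
  then show ?thesis by linarith
qed

lemma locally_dirac_edge_common_nbhd:
  assumes g: "graph V E" and ld: "locally_dirac V E" and "E x y"
  shows "\<exists>w. E x w \<and> E y w"
proof -
  have x: "x \<in> V" and y: "y \<in> nbhd V E x"
    using assms graph_edge_in_vertices nbhd_graph by fastforce+
  then have "0 < card (nbhd V E x)"
    using finite_nbhd[OF g] card_gt_0_iff by blast
  with locally_diracD[OF ld x y] have "{w \<in> nbhd V E x. E y w} \<noteq> {}"
    by (metis card.empty mult_0_right not_le)
  then show ?thesis using nbhd_graph[OF g] by auto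
qed

lemma locally_dirac_two_common_nbhds:
  assumes g: "graph V E" and ld: "locally_dirac V E"
    and "E x p" "E x q" "p \<noteq> q" "\<not> E p q"
  shows "2 \<le> card {w. E x w \<and> E p w \<and> E q w}"
proof -
  define N where "N = nbhd V E x"
  define A where "A = {w \<in> N. E p w}"
  define B where "B = {w \<in> N. E q w}"
  have x: "x \<in> V" and pq: "p \<in> N" "q \<in> N"
    using assms graph_edge_in_vertices nbhd_graph unfolding N_def by fastforce+
  have finN: "finite N" using finite_nbhd[OF g] N_def by simp
  have A: "card N \<le> 2 * card A" and B: "card N \<le> 2 * card B"
    using locally_diracD[OF ld x] pq unfolding A_def B_def N_def by auto
  have "A \<union> B \<subseteq> N - {p, q}"
    using graph_irrefl[OF g] graph_sym[OF g] \<open>\<not> E p q\<close> unfolding A_def B_def by blast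
  then have "card (A \<union> B) \<le> card (N - {p, q})"
    using finN by (intro card_mono) auto
  also have "\<dots> = card N - 2"
    using finN pq \<open>p \<noteq> q\<close> by (simp add: card_Diff_subset)
  finally have "card (A \<union> B) \<le> card N - 2" .
  moreover have "card A + card B = card (A \<union> B) + card (A \<inter> B)"
    using card_Un_Int[of A B] finN unfolding A_def B_def by simp
  moreover have "2 \<le> card N"
    using card_mono[OF finN, of "{p, q}"] pq \<open>p \<noteq> q\<close> by simp
  ultimately have "2 \<le> card (A \<inter> B)" using A B by linarith
  also have "A \<inter> B = {w. E x w \<and> E p w \<and> E q w}"
    using nbhd_graph[OF g] unfolding A_def B_def N_def by auto
  finally show ?thesis .
qed

lemma locally_dirac_nbhd_reachable:
  assumes g: "graph V E" and ld: "locally_dirac V E" and X: "finite X" "card X < 3"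
    and x: "x \<in> X" and p: "E x p" "p \<notin> X" and q: "E x q" "q \<notin> X"
  shows "reachable_in E (V - X) p q"
proof -
  have pq: "p \<in> V" "q \<in> V" using p q graph_edge_in_vertices[OF g] by blast+
  consider "p = q" | "E p q" | "p \<noteq> q" "\<not> E p q" by blast
  then show ?thesis
  proof cases
    case 3
    define C where "C = {w. E x w \<and> E p w \<and> E q w}"
    have "card (X - {x}) < card C"
      using locally_dirac_two_common_nbhds[OF g ld p(1) q(1) 3] X x unfolding C_def by simp
    moreover have "finite (X - {x})" using X by simp
    ultimately obtain w where w: "w \<in> C" "w \<notin> X - {x}"
      by (meson card_mono not_le subsetI)
    then have "w \<notin> X" "w \<in> V" "E p w" "E w q"
      using graph_irrefl[OF g] graph_sym[OF g] graph_edge_in_vertices[OF g]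
      unfolding C_def by blast+
    then have "reachable_in E (V - X) w q"
      using pq q by auto
    then show ?thesis
      using \<open>w \<notin> X\<close> \<open>w \<in> V\<close> \<open>E p w\<close> pq p by (auto intro: converse_rtranclp_into_rtranclp)
  qed (use pq p q in auto)
qed

lemma locally_dirac_edge_common_nbhd_outside:
  assumes g: "graph V E" and ld: "locally_dirac V E" and X: "finite X" "card X < 3"
    and "x \<in> X" "y \<in> X" "E x y"
  shows "\<exists>c \<in> V - X. E x c \<and> E y c"
proof -
  obtain c where c: "E x c" "E y c"
    using locally_dirac_edge_common_nbhd[OF g ld \<open>E x y\<close>] by blast
  have "x \<noteq> y" "x \<noteq> c" "y \<noteq> c"
    using c \<open>E x y\<close> graph_irrefl[OF g] by metis+
  then have "card {x, y, c} = 3" by simp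
  then have "c \<notin> X"
    using card_mono[OF \<open>finite X\<close>, of "{x, y, c}"] assms by auto
  then show ?thesis using c graph_edge_in_vertices[OF g] by blast
qed

lemma locally_dirac_walk_bypasses:
  assumes g: "graph V E" and ld: "locally_dirac V E" and X: "finite X" "card X < 3"
    and a: "a \<in> V - X" and walk: "reachable_in E V a v"
  shows "(v \<notin> X \<longrightarrow> reachable_in E (V - X) a v)
       \<and> (v \<in> X \<longrightarrow> (\<forall>p. E v p \<and> p \<notin> X \<longrightarrow> reachable_in E (V - X) a p))"
  using walk
proof (induction rule: rtranclp_induct)
  case base
  then show ?case using a by auto
next
  case (step v w)
  have vw: "v \<in> V" "w \<in> V" "E v w" "E w v" using step(2) graph_sym[OF g] by auto
  note linked = locally_dirac_nbhd_reachable[OF g ld X]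
  show ?case
  proof (cases "v \<in> X")
    case False
    then have av: "reachable_in E (V - X) a v" using step.IH by blast
    have "reachable_in E (V - X) a p" if "w \<in> X" "E w p" "p \<notin> X" for p
      using rtranclp_trans[OF av linked[OF that(1) vw(4) False that(2,3)]] .
    moreover have "reachable_in E (V - X) a w" if "w \<notin> X"
      using av that False vw by (auto intro: rtranclp.rtrancl_into_rtrancl)
    ultimately show ?thesis by blast
  next
    case True
    then have IH: "\<And>p. E v p \<Longrightarrow> p \<notin> X \<Longrightarrow> reachable_in E (V - X) a p"
      using step.IH by blast
    have "reachable_in E (V - X) a p" if wX: "w \<in> X" and "E w p" "p \<notin> X" for p
    proof -
      obtain c where c: "c \<in> V - X" "E v c" "E w c"
        using locally_dirac_edge_common_nbhd_outside[OF g ld X True wX vw(3)] by blast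
      show ?thesis
        using rtranclp_trans[OF IH[OF c(2)] linked[OF wX c(3)]] c that by blast
    qed
    then show ?thesis using IH vw(3) by blast
  qed
qed

theorem mainTheorem5:
  fixes V :: "'a set" and E :: "'a \<Rightarrow> 'a \<Rightarrow> bool"
  assumes "graph V E"
    and "connected_graph V E"
    and "locally_dirac V E"
    and "card V \<ge> 4"
  shows "k_connected 3 V E"
  unfolding k_connected_def
proof (intro conjI allI impI)
  show "3 < card V" using assms(4) by simp
  fix X assume "X \<subseteq> V \<and> card X < 3"
  then have X: "finite X" "card X < 3"
    using finite_subset[OF _ graph_finite[OF assms(1)]] by auto
  have "V - X \<noteq> {}"
  proof
    assume "V - X = {}"
    then have "card V \<le> card X" using card_mono[OF X(1)] by blast
    with X(2) assms(4) show False by linarith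
  qed
  moreover have "reachable_in E (V - X) a b" if "a \<in> V - X" "b \<in> V - X" for a b
    using locally_dirac_walk_bypasses[OF assms(1,3) X that(1)] assms(2) that
    unfolding connected_graph_def connected_on_def by blast
  ultimately show "connected_on E (V - X)" unfolding connected_on_def by blast
qed

end
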